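(* Let $(g,n)$ be a hyperbolic pair and $d\in\mathbb Z$. The map $\mathfrak m\mapsto(\mathfrak m|_{\mathcal D(\Gamma)})_{\Gamma\in G_{g,n}}$ is a bijection from the set of degree $d$ universal stability conditions of type $(g,n)$ onto the set of families $(\mathfrak m^\Gamma)_{\Gamma\in G_{g,n}}$, where each $\mathfrak m^\Gamma$ is a degree $d$ c-stability condition on $\Gamma$, that agree on common domains (i.e. $\mathfrak m^\Gamma_{(e,h,A)}=\mathfrak m^{\Gamma'}_{(e,h,A)}$ whenever $(e,h,A)\in\mathcal D(\Gamma)\cap\mathcal D(\Gamma')$). The inverse sends such a family to $\mathfrak m$ with $\mathfrak m_{(e,h,A)}=\mathfrak m^\Gamma_{(e,h,A)}$ for any $\Gamma$ with $(e,h,A)\in\mathcal D(\Gamma)$.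
   Context: Fix integers $g,n\ge0$ with $2g-2+n>0$, $[n]=\{1,\dots,n\}$. A stable graph of type $(g,n)$ is a finite connected multigraph $\Gamma$ (loops allowed) with genus function $g:V(\Gamma)\to\mathbb Z_{\ge0}$ and markings $A(v)\subseteq[n]$ partitioning $[n]$, with $|E(\Gamma)|-|V(\Gamma)|+1+\sum_v g(v)=g$ and $2g(v)-2+\mathrm{val}(v)+|A(v)|>0$ for all $v$; $G_{g,n}$ is the set of representatives of isomorphism classes of such graphs. For $W\subseteq V(\Gamma)$: $\mathrm{val}(W)$ = number of edges between $W$ and its complement, $g(W)$ = genus of the induced subgraph $\Gamma[W]$ ($|E(\Gamma[W])|-|W|+1+\sum_{v\in W}g(v)$), $A(W)=\bigcup_{v\in W}A(v)$; $W$ is nontrivial biconnected if $\emptyset\ne W\ne V(\Gamma)$ and $W$ and its complement induce connected subgraphs; $\mathcal D(\Gamma)=\{(\mathrm{val}(W),g(W),A(W)): W \text{ nontrivial biconnected}\}$. The vine graph $V(e,h,A)$ has vertices $v_1,v_2$ joined by $e$ edges, no loops, $g(v_1)=h$, $A(v_1)=A$, $g(v_2)=g+1-e-h$, $A(v_2)=[n]\setminus A$; $\mathcal D_{g,n}$ is the set of $(e,h,A)$ ($e\ge1,h\ge0,g+1-e-h\ge0$, $A\subseteq[n]$) with $V(e,h,A)$ stable. A degree $d$ universal stability condition of type $(g,n)$ is a family of integers $(\mathfrak m_{(e,h,A)})_{(e,h,A)\in\mathcal D_{g,n}}$ with (i) $\mathfrak m_{(e,h,A)}+\mathfrak m_{(e,g+1-e-h,[n]\setminus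 A)}=d+1-e$ and (ii) $0\le \mathfrak m_{(e,h,A)}-h-(\mathfrak m_{(e',h',A')}-h')-(\mathfrak m_{(e'',h'',A'')}-h'')\le1$ whenever $A=A'\sqcup A''$, $2(h+1-h'-h'')=e'+e''-e$, and $e<e'+e''$, $e'<e+e''$, $e''<e+e'$. A degree $d$ c-stability condition on $\Gamma$ is a family of integers indexed by $\mathcal D(\Gamma)$ satisfying (i) and (ii) for all triples of elements of $\mathcal D(\Gamma)$. *)

theory Defs
  imports Main "HOL-Library.FuncSet"
begin

text \<open>A multigraph with loops: vertices, edge identifiers, the set of endpoints of
  each edge (one element for a loop, two for an ordinary edge), a genus function
  and markings.\<close>
record sgraph =
  verts  :: "nat set"
  edges  :: "nat set"
  endpts :: "nat \<Rightarrow> nat set"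
  gen    :: "nat \<Rightarrow> nat"
  mark   :: "nat \<Rightarrow> nat set"

type_synonym triple = "nat \<times> nat \<times> nat set"

definition vval :: "sgraph \<Rightarrow> nat \<Rightarrow> nat" where
  "vval G v = 2 * card {e \<in> edges G. endpts G e = {v}}
            + card {e \<in> edges G. v \<in> endpts G e \<and> card (endpts G e) = 2}"

definition adj_in :: "sgraph \<Rightarrow> nat set \<Rightarrow> nat \<Rightarrow> nat \<Rightarrow> bool" where
  "adj_in G W u v \<longleftrightarrow> u \<in> W \<and> v \<in> W \<and> (\<exists>e\<in>edges G. endpts G e = {u, v})"

definition connected_in :: "sgraph \<Rightarrow> nat set \<Rightarrow> bool" where
  "connected_in G W \<longleftrightarrow> W \<noteq> {} \<and> (\<forall>u\<in>W. \<forall>v\<in>W. (adj_in G W)\<^sup>*\<^sup>* u v)"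

definition inner_edges :: "sgraph \<Rightarrow> nat set \<Rightarrow> nat set" where
  "inner_edges G W = {e \<in> edges G. endpts G e \<subseteq> W}"

definition setval :: "sgraph \<Rightarrow> nat set \<Rightarrow> nat" where
  "setval G W = card {e \<in> edges G. endpts G e \<inter> W \<noteq> {} \<and> endpts G e - W \<noteq> {}}"

definition setgen :: "sgraph \<Rightarrow> nat set \<Rightarrow> int" where
  "setgen G W = int (card (inner_edges G W)) - int (card W) + 1 + (\<Sum>v\<in>W. int (gen G v))"

definition setmark :: "sgraph \<Rightarrow> nat set \<Rightarrow> nat set" where
  "setmark G W = (\<Union>v\<in>W. mark G v)"

definition stable_graph :: "nat \<Rightarrow> nat \<Rightarrow> sgraph \<Rightarrow> bool" where
  "stable_graph g n G \<longleftrightarrow>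
     finite (verts G) \<and> finite (edges G) \<and>
     (\<forall>e\<in>edges G. endpts G e \<subseteq> verts G \<and> 1 \<le> card (endpts G e) \<and> card (endpts G e) \<le> 2) \<and>
     (\<forall>v\<in>verts G. mark G v \<subseteq> {1..n}) \<and>
     (\<forall>v\<in>verts G. \<forall>w\<in>verts G. v \<noteq> w \<longrightarrow> mark G v \<inter> mark G w = {}) \<and>
     (\<Union>v\<in>verts G. mark G v) = {1..n} \<and>
     connected_in G (verts G) \<and>
     int (card (edges G)) - int (card (verts G)) + 1 + (\<Sum>v\<in>verts G. int (gen G v)) = int g \<and>
     (\<forall>v\<in>verts G. 2 * int (gen G v) - 2 + int (vval G v) + int (card (mark G v)) > 0)"

definition graph_iso :: "sgraph \<Rightarrow> sgraph \<Rightarrow> bool" where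
  "graph_iso G H \<longleftrightarrow> (\<exists>f \<phi>. bij_betw f (verts G) (verts H) \<and> bij_betw \<phi> (edges G) (edges H) \<and>
     (\<forall>e\<in>edges G. endpts H (\<phi> e) = f ` endpts G e) \<and>
     (\<forall>v\<in>verts G. gen H (f v) = gen G v \<and> mark H (f v) = mark G v))"

definition is_Ggn :: "nat \<Rightarrow> nat \<Rightarrow> sgraph set \<Rightarrow> bool" where
  "is_Ggn g n R \<longleftrightarrow> (\<forall>G\<in>R. stable_graph g n G) \<and>
     (\<forall>G. stable_graph g n G \<longrightarrow> (\<exists>H\<in>R. graph_iso G H)) \<and>
     (\<forall>G\<in>R. \<forall>H\<in>R. graph_iso G H \<longrightarrow> G = H)"

definition nontriv_biconn :: "sgraph \<Rightarrow> nat set \<Rightarrow> bool" where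
  "nontriv_biconn G W \<longleftrightarrow> W \<subseteq> verts G \<and> W \<noteq> {} \<and> W \<noteq> verts G \<and>
     connected_in G W \<and> connected_in G (verts G - W)"

text \<open>\<D>(\<Gamma>); the genus of a connected induced subgraph is nonnegative.\<close>
definition DG :: "sgraph \<Rightarrow> triple set" where
  "DG G = {(setval G W, nat (setgen G W), setmark G W) | W. nontriv_biconn G W}"

definition vine :: "nat \<Rightarrow> nat \<Rightarrow> nat \<Rightarrow> nat \<Rightarrow> nat set \<Rightarrow> sgraph" where
  "vine g n e h A = \<lparr> verts = {0, 1}, edges = {0..<e}, endpts = (\<lambda>_. {0, 1}),
      gen = (\<lambda>v. if v = 0 then h else g + 1 - e - h),
      mark = (\<lambda>v. if v = 0 then A else {1..n} - A) \<rparr>"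

definition Dgn :: "nat \<Rightarrow> nat \<Rightarrow> triple set" where
  "Dgn g n = {(e, h, A). e \<ge> 1 \<and> int g + 1 - int e - int h \<ge> 0 \<and> A \<subseteq> {1..n} \<and>
      stable_graph g n (vine g n e h A)}"

definition cond_i :: "nat \<Rightarrow> nat \<Rightarrow> int \<Rightarrow> triple set \<Rightarrow> (triple \<Rightarrow> int) \<Rightarrow> bool" where
  "cond_i g n d D m \<longleftrightarrow> (\<forall>(e, h, A)\<in>D.
      m (e, h, A) + m (e, g + 1 - e - h, {1..n} - A) = d + 1 - int e)"

definition cond_ii :: "triple set \<Rightarrow> (triple \<Rightarrow> int) \<Rightarrow> bool" where
  "cond_ii D m \<longleftrightarrow> (\<forall>(e, h, A)\<in>D. \<forall>(e', h', A')\<in>D. \<forall>(e'', h'', A'')\<in>D.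
      (A = A' \<union> A'' \<and> A' \<inter> A'' = {} \<and>
       2 * (int h + 1 - int h' - int h'') = int e' + int e'' - int e \<and>
       e < e' + e'' \<and> e' < e + e'' \<and> e'' < e + e') \<longrightarrow>
      0 \<le> m (e, h, A) - int h - (m (e', h', A') - int h') - (m (e'', h'', A'') - int h'') \<and>
      m (e, h, A) - int h - (m (e', h', A') - int h') - (m (e'', h'', A'') - int h'') \<le> 1)"

definition univ_stab :: "nat \<Rightarrow> nat \<Rightarrow> int \<Rightarrow> (triple \<Rightarrow> int) set" where
  "univ_stab g n d = {m \<in> Dgn g n \<rightarrow>\<^sub>E UNIV. cond_i g n d (Dgn g n) m \<and> cond_ii (Dgn g n) m}"

definition c_stab :: "nat \<Rightarrow> nat \<Rightarrow> int \<Rightarrow> sgraph \<Rightarrow> (triple \<Rightarrow> int) set" where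
  "c_stab g n d G = {m \<in> DG G \<rightarrow>\<^sub>E UNIV. cond_i g n d (DG G) m \<and> cond_ii (DG G) m}"

definition compat_families :: "nat \<Rightarrow> nat \<Rightarrow> int \<Rightarrow> sgraph set \<Rightarrow> (sgraph \<Rightarrow> triple \<Rightarrow> int) set" where
  "compat_families g n d R = {F \<in> (\<Pi>\<^sub>E G\<in>R. c_stab g n d G).
      \<forall>G\<in>R. \<forall>H\<in>R. \<forall>t \<in> DG G \<inter> DG H. F G t = F H t}"

definition restr_map :: "sgraph set \<Rightarrow> (triple \<Rightarrow> int) \<Rightarrow> sgraph \<Rightarrow> triple \<Rightarrow> int" where
  "restr_map R m = (\<lambda>G\<in>R. restrict m (DG G))"

end

theory Submission
  imports Defs
begin

text \<open>Restriction is injective because every \<open>(e, h, A) \<in> \<D>\<^sub>g\<^sub>,\<^sub>n\<close> lies in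
  \<open>\<D>(\<Gamma>)\<close> for the vine graph \<open>V(e, h, A)\<close>, and hence for the representative of its
  isomorphism class. Conversely, a compatible family glues to a function on \<open>\<D>\<^sub>g\<^sub>,\<^sub>n\<close>.
  Condition (i) holds for the glued function because each \<open>\<D>(\<Gamma>)\<close> is closed under passing
  from \<open>W\<close> to its complement, and condition (ii) because the three triples of every instance of (ii)
  are realised simultaneously in one stable graph, a triangle with vertex sets \<open>{0}\<close>, \<open>{1}\<close>
  and \<open>{0, 1}\<close> giving the three triples.\<close>

section \<open>Vertex sets of stable graphs\<close>

lemma stable_graphD:
  assumes "stable_graph g n G"
  shows stable_graph_finite_verts: "finite (verts G)"
    and stable_graph_finite_edges: "finite (edges G)"
    and stable_graph_endpts: "e \<in> edges G \<Longrightarrow>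
      endpts G e \<subseteq> verts G \<and> 1 \<le> card (endpts G e) \<and> card (endpts G e) \<le> 2"
    and stable_graph_mark_subset: "v \<in> verts G \<Longrightarrow> mark G v \<subseteq> {1..n}"
    and stable_graph_mark_disjoint: "v \<in> verts G \<Longrightarrow> w \<in> verts G \<Longrightarrow> v \<noteq> w \<Longrightarrow> mark G v \<inter> mark G w = {}"
    and stable_graph_UN_mark: "(\<Union>v\<in>verts G. mark G v) = {1..n}"
    and stable_graph_connected: "connected_in G (verts G)"
    and stable_graph_genus: "int (card (edges G)) - int (card (verts G)) + 1 + (\<Sum>v\<in>verts G. int (gen G v)) = int g"
    and stable_graph_stable_vertex: "v \<in> verts G \<Longrightarrow> 2 * int (gen G v) - 2 + int (vval G v) + int (card (mark G v)) > 0"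
  using assms unfolding stable_graph_def by simp_all

lemma card_1_or_2_cases:
  assumes "1 \<le> card X" "card X \<le> (2::nat)"
  obtains a where "X = {a}" | a b where "a \<noteq> b" "X = {a, b}"
proof -
  have "card X = 1 \<or> card X = 2" using assms by linarith
  then show ?thesis using that by (auto simp: card_1_singleton_iff card_2_iff)
qed

lemma card_filter_eq_sum: "finite A \<Longrightarrow> card {x\<in>A. P x} = (\<Sum>x\<in>A. if P x then 1 else 0)"
  by (simp add: sum.inter_filter[symmetric])

lemma vval_eq_sum:
  "finite (edges G) \<Longrightarrow> vval G v = (\<Sum>e\<in>edges G.
     2 * (if endpts G e = {v} then 1 else 0) + (if v \<in> endpts G e \<and> card (endpts G e) = 2 then 1 else 0))"
  unfolding vval_def by (simp add: card_filter_eq_sum sum.distrib sum_distrib_left)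

lemma sum_incidence:
  assumes "finite W" "1 \<le> card X" "card X \<le> (2::nat)"
  shows "(\<Sum>v\<in>W. 2 * (if X = {v} then 1 else 0) + (if v \<in> X \<and> card X = 2 then 1 else 0))
     = 2 * (if X \<subseteq> W then 1 else 0) + (if X \<inter> W \<noteq> {} \<and> X - W \<noteq> {} then (1::nat) else 0)"
  using assms(2,3)
proof (cases rule: card_1_or_2_cases)
  case (1 a)
  then show ?thesis using assms(1)
    by (simp add: sum.distrib if_distrib[of "\<lambda>x. 2*x"] eq_commute[of "{a}"] cong: if_cong)
next
  case (2 a b)
  have "(\<Sum>v\<in>W. (if v \<in> {a,b} then 1 else 0::nat)) = card (W \<inter> {a,b})"
    using assms(1) by (simp add: sum.inter_filter[symmetric] Int_def)
  also have "\<dots> = (if a \<in> W then 1 else 0) + (if b \<in> W then 1 else 0)"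
    using 2 by (auto simp: Int_insert_right)
  finally have s: "(\<Sum>v\<in>W. (if v \<in> {a,b} then 1 else 0::nat)) =
    (if a \<in> W then 1 else 0) + (if b \<in> W then 1 else 0)" .
  have "\<And>v. X \<noteq> {v}" using 2 by (auto simp: doubleton_eq_iff)
  then have "(\<Sum>v\<in>W. 2 * (if X = {v} then 1 else 0) + (if v \<in> X \<and> card X = 2 then 1 else 0))
     = (\<Sum>v\<in>W. (if v \<in> {a,b} then 1 else 0::nat))" using 2 by (intro sum.cong) auto
  then show ?thesis using 2 s by auto
qed

lemma sum_vval:
  assumes G: "stable_graph g n G" and "finite W"
  shows "(\<Sum>v\<in>W. vval G v) = 2 * card (inner_edges G W) + setval G W"
proof -
  note fin = stable_graph_finite_edges[OF G]
  have "(\<Sum>v\<in>W. vval G v) = (\<Sum>e\<in>edges G. \<Sum>v\<in>W. 2 * (if endpts G e = {v} then 1 else 0) +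
      (if v \<in> endpts G e \<and> card (endpts G e) = 2 then 1 else 0))"
    using fin by (simp add: vval_eq_sum sum.swap[of _ W])
  also have "\<dots> = (\<Sum>e\<in>edges G. 2 * (if endpts G e \<subseteq> W then 1 else 0) +
      (if endpts G e \<inter> W \<noteq> {} \<and> endpts G e - W \<noteq> {} then (1::nat) else 0))"
    using stable_graph_endpts[OF G] \<open>finite W\<close> by (intro sum.cong refl sum_incidence) auto
  also have "\<dots> = 2 * card (inner_edges G W) + setval G W"
    using fin unfolding inner_edges_def setval_def
    by (simp add: card_filter_eq_sum sum.distrib sum_distrib_left)
  finally show ?thesis .
qed

lemma connected_in_parent_edges:
  assumes conn: "connected_in G W" and r: "r \<in> W"
  obtains pe and dist :: "nat \<Rightarrow> nat" where "\<And>v. v \<in> W - {r} \<Longrightarrow>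
    \<exists>u\<in>W. pe v \<in> edges G \<and> endpts G (pe v) = {u, v} \<and> dist u < dist v"
proof -
  let ?a = "adj_in G W"
  define dist where "dist v = (LEAST k. (?a ^^ k) r v)" for v
  have dist_le: "dist v \<le> k" if "(?a ^^ k) r v" for v k
    unfolding dist_def using that by (rule Least_le)
  have dist_reach: "(?a ^^ dist v) r v" if "v \<in> W" for v
  proof -
    have "\<exists>k. (?a ^^ k) r v" using conn r that unfolding connected_in_def by (simp add: rtranclp_power)
    then show ?thesis unfolding dist_def by (rule LeastI_ex)
  qed
  have "\<exists>e. \<exists>u\<in>W. e \<in> edges G \<and> endpts G e = {u, v} \<and> dist u < dist v"
    if v: "v \<in> W - {r}" for v
  proof (cases "dist v")
    case 0
    with dist_reach[of v] v show ?thesis by (auto elim: relpowp_0_E)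
  next
    case (Suc j)
    with dist_reach[of v] v obtain u where u: "(?a ^^ j) r u" "?a u v"
      by (auto elim: relpowp_Suc_E)
    from dist_le[OF u(1)] Suc have "dist u < dist v" by simp
    with u(2) show ?thesis unfolding adj_in_def by blast
  qed
  then show ?thesis using that by metis
qed

text \<open>The parent edges form an injection from the non-root vertices into the inner edges.\<close>
lemma connected_in_card_le:
  assumes fin: "finite (edges G)" and "finite W" and conn: "connected_in G W"
  shows "card W \<le> card (inner_edges G W) + 1"
proof -
  from conn obtain r where r: "r \<in> W" unfolding connected_in_def by auto
  obtain pe and dist :: "nat \<Rightarrow> nat" where pe: "\<And>v. v \<in> W - {r} \<Longrightarrow>
      \<exists>u\<in>W. pe v \<in> edges G \<and> endpts G (pe v) = {u, v} \<and> dist u < dist v"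
    using connected_in_parent_edges[OF conn r] by blast
  have "inj_on pe (W - {r})"
  proof (rule inj_onI)
    fix v w assume v: "v \<in> W - {r}" and w: "w \<in> W - {r}" and eq: "pe v = pe w"
    obtain u where u: "endpts G (pe v) = {u, v}" "dist u < dist v" using pe[OF v] by blast
    obtain u' where u': "endpts G (pe w) = {u', w}" "dist u' < dist w" using pe[OF w] by blast
    show "v = w"
    proof (rule ccontr)
      assume "v \<noteq> w"
      with u u' eq have "v = u'" "w = u" by (auto simp: doubleton_eq_iff)
      with u u' show False by simp
    qed
  qed
  moreover have "pe ` (W - {r}) \<subseteq> inner_edges G W"
    using pe unfolding inner_edges_def by fastforce
  moreover have "finite (inner_edges G W)" using fin unfolding inner_edges_def by simp
  ultimately have "card (W - {r}) \<le> card (inner_edges G W)"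
    by (simp add: card_inj_on_le)
  then show ?thesis using r \<open>finite W\<close> by simp
qed

lemma setgen_nonneg:
  assumes G: "stable_graph g n G" and W: "W \<subseteq> verts G" and "connected_in G W"
  shows "setgen G W \<ge> 0"
proof -
  have "finite W" using W stable_graph_finite_verts[OF G] by (rule finite_subset)
  then have "card W \<le> card (inner_edges G W) + 1"
    using connected_in_card_le stable_graph_finite_edges[OF G] \<open>connected_in G W\<close> by blast
  moreover have "(\<Sum>v\<in>W. int (gen G v)) \<ge> 0" by (simp add: sum_nonneg)
  ultimately show ?thesis unfolding setgen_def by linarith
qed

lemma card_edges_split:
  assumes G: "stable_graph g n G" and W: "W \<subseteq> verts G"
  shows "card (edges G) = card (inner_edges G W) + card (inner_edges G (verts G - W)) + setval G W"
proof -
  let ?I = "inner_edges G W" and ?J = "inner_edges G (verts G - W)"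
    and ?C = "{e \<in> edges G. endpts G e \<inter> W \<noteq> {} \<and> endpts G e - W \<noteq> {}}"
  have ne: "endpts G e \<noteq> {} \<and> endpts G e \<subseteq> verts G" if "e \<in> edges G" for e
    using stable_graph_endpts[OF G that] by fastforce
  have "edges G = ?I \<union> ?J \<union> ?C" using ne unfolding inner_edges_def by blast
  then have "card (edges G) = card (?I \<union> ?J \<union> ?C)" by (rule arg_cong)
  moreover have "?I \<inter> ?J = {}" "(?I \<union> ?J) \<inter> ?C = {}"
    using ne W unfolding inner_edges_def by blast+
  moreover have "finite ?I" "finite ?J" "finite ?C"
    using stable_graph_finite_edges[OF G] unfolding inner_edges_def by auto
  ultimately show ?thesis unfolding setval_def by (simp add: card_Un_disjoint)
qed

lemma setval_diff:
  assumes G: "stable_graph g n G" and W: "W \<subseteq> verts G"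
  shows "setval G (verts G - W) = setval G W"
proof -
  have "{e \<in> edges G. endpts G e \<inter> (verts G - W) \<noteq> {} \<and> endpts G e - (verts G - W) \<noteq> {}} =
        {e \<in> edges G. endpts G e \<inter> W \<noteq> {} \<and> endpts G e - W \<noteq> {}}"
    using stable_graph_endpts[OF G] W by blast
  then show ?thesis unfolding setval_def by simp
qed

lemma setgen_diff:
  assumes G: "stable_graph g n G" and W: "W \<subseteq> verts G"
  shows "setgen G (verts G - W) = int g + 1 - int (setval G W) - setgen G W"
proof -
  note fin = stable_graph_finite_verts[OF G]
  have "card (verts G) = card W + card (verts G - W)"
    using W fin by (simp add: card_Diff_subset card_mono finite_subset)
  moreover have "(\<Sum>v\<in>verts G. int (gen G v)) =
      (\<Sum>v\<in>W. int (gen G v)) + (\<Sum>v\<in>verts G - W. int (gen G v))"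
    using fin W by (metis add.commute sum.subset_diff)
  ultimately show ?thesis
    using card_edges_split[OF G W] stable_graph_genus[OF G] unfolding setgen_def by simp
qed

lemma setmark_diff:
  assumes G: "stable_graph g n G" and W: "W \<subseteq> verts G"
  shows "setmark G (verts G - W) = {1..n} - setmark G W"
proof
  show "setmark G (verts G - W) \<subseteq> {1..n} - setmark G W"
  proof
    fix x assume "x \<in> setmark G (verts G - W)"
    then obtain v where v: "v \<in> verts G" "v \<notin> W" "x \<in> mark G v" unfolding setmark_def by blast
    have "x \<notin> mark G w" if "w \<in> W" for w
      using stable_graph_mark_disjoint[OF G v(1), of w] that W v by blast
    then show "x \<in> {1..n} - setmark G W"
      using stable_graph_mark_subset[OF G v(1)] v(3) unfolding setmark_def by blast
  qed
  show "{1..n} - setmark G W \<subseteq> setmark G (verts G - W)"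
    using stable_graph_UN_mark[OF G] unfolding setmark_def by blast
qed

lemma setmark_subset:
  "stable_graph g n G \<Longrightarrow> W \<subseteq> verts G \<Longrightarrow> setmark G W \<subseteq> {1..n}"
  using stable_graph_mark_subset unfolding setmark_def by blast

text \<open>Summing the stability inequalities of the vertices of \<open>W\<close>.\<close>
lemma stable_vertex_set:
  assumes G: "stable_graph g n G" and W: "W \<subseteq> verts G" and "W \<noteq> {}"
  shows "2 * setgen G W - 2 + int (setval G W) + int (card (setmark G W)) > 0"
proof -
  have fW: "finite W" using W stable_graph_finite_verts[OF G] by (rule finite_subset)
  have "(\<Sum>v\<in>W. (1::int)) \<le> (\<Sum>v\<in>W. 2 * int (gen G v) - 2 + int (vval G v) + int (card (mark G v)))"
    using stable_graph_stable_vertex[OF G] W by (intro sum_mono) force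
  moreover have "(\<Sum>v\<in>W. (1::int)) > 0" using fW \<open>W \<noteq> {}\<close> by (simp add: card_gt_0_iff)
  moreover have "(\<Sum>v\<in>W. 2 * int (gen G v) - 2 + int (vval G v) + int (card (mark G v))) =
      2 * (\<Sum>v\<in>W. int (gen G v)) - 2 * int (card W) + int (\<Sum>v\<in>W. vval G v) + int (\<Sum>v\<in>W. card (mark G v))"
    by (simp add: sum.distrib sum_subtractf sum_distrib_left)
  moreover have "(\<Sum>v\<in>W. card (mark G v)) = card (setmark G W)"
    unfolding setmark_def
  proof (rule card_UN_disjoint[symmetric, OF fW])
    show "\<forall>v\<in>W. finite (mark G v)"
      using stable_graph_mark_subset[OF G] W by (meson finite_atLeastAtMost finite_subset subsetD)
    show "\<forall>v\<in>W. \<forall>w\<in>W. v \<noteq> w \<longrightarrow> mark G v \<inter> mark G w = {}"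
      using stable_graph_mark_disjoint[OF G] W by blast
  qed
  ultimately show ?thesis using sum_vval[OF G fW] unfolding setgen_def by simp
qed

lemma adj_in_path_crosses:
  assumes "(adj_in G V)\<^sup>*\<^sup>* u v" "u \<in> W" "v \<notin> W"
  shows "\<exists>e\<in>edges G. endpts G e \<inter> W \<noteq> {} \<and> endpts G e - W \<noteq> {}"
  using assms
proof (induction rule: rtranclp_induct)
  case (step y z)
  then show ?case by (cases "y \<in> W") (auto simp: adj_in_def)
qed simp

lemma setval_pos:
  assumes G: "stable_graph g n G" and W: "W \<subseteq> verts G" "W \<noteq> {}" "W \<noteq> verts G"
  shows "setval G W \<ge> 1"
proof -
  let ?C = "{e \<in> edges G. endpts G e \<inter> W \<noteq> {} \<and> endpts G e - W \<noteq> {}}"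
  obtain u v where u: "u \<in> W" and v: "v \<in> verts G" "v \<notin> W" using W by blast
  have "(adj_in G (verts G))\<^sup>*\<^sup>* u v"
    using stable_graph_connected[OF G] u v(1) W(1) unfolding connected_in_def by blast
  then have "?C \<noteq> {}" using adj_in_path_crosses[OF _ u v(2)] by blast
  moreover have "finite ?C" using stable_graph_finite_edges[OF G] by simp
  ultimately have "card ?C > 0" by (simp add: card_gt_0_iff)
  then show ?thesis unfolding setval_def by simp
qed

section \<open>Vine graphs and the sets \<open>\<D>(\<Gamma>)\<close>\<close>

fun compl_triple :: "nat \<Rightarrow> nat \<Rightarrow> triple \<Rightarrow> triple" where
  "compl_triple g n (e, h, A) = (e, g + 1 - e - h, {1..n} - A)"

lemma connected_in_singleton: "connected_in G {v}"
  unfolding connected_in_def by auto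

lemma symp_adj_in: "symp (adj_in G W)"
  unfolding symp_def adj_in_def by (auto simp: insert_commute)

lemma vine_simps:
  "verts (vine g n e h A) = {0, 1}" "edges (vine g n e h A) = {0..<e}"
  "endpts (vine g n e h A) i = {0, 1}"
  "gen (vine g n e h A) v = (if v = 0 then h else g + 1 - e - h)"
  "mark (vine g n e h A) v = (if v = 0 then A else {1..n} - A)"
  unfolding vine_def by simp_all

lemma vval_vine: "v \<in> {0, 1} \<Longrightarrow> vval (vine g n e h A) v = e"
  unfolding vval_def vine_simps by auto

lemma connected_in_vine:
  assumes "e \<ge> 1" shows "connected_in (vine g n e h A) {0, 1}"
proof -
  have "adj_in (vine g n e h A) {0, 1} 0 1"
    unfolding adj_in_def vine_simps using assms by (auto intro!: exI[of _ 0])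
  then show ?thesis unfolding connected_in_def using sympD[OF symp_adj_in] by fastforce
qed

lemma stable_graph_vine_iff:
  assumes e: "e \<ge> 1" and gh: "int g + 1 - int e - int h \<ge> 0" and A: "A \<subseteq> {1..n}"
  shows "stable_graph g n (vine g n e h A) \<longleftrightarrow>
    2 * int h - 2 + int e + int (card A) > 0 \<and>
    2 * (int g + 1 - int e - int h) - 2 + int e + int (card ({1..n} - A)) > 0"
proof -
  have "int (g + 1 - e - h) = int g + 1 - int e - int h" using gh by linarith
  moreover have "(\<Sum>v\<in>{0::nat, 1}. int (gen (vine g n e h A) v)) = int h + int (g + 1 - e - h)"
    by (simp add: vine_simps)
  ultimately show ?thesis
    unfolding stable_graph_def using connected_in_vine[OF e, of g n h A] A Un_absorb2[OF A]
    by (simp add: vine_simps vval_vine Diff_Int_distrib2 Un_absorb1 Int_absorb2)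
qed

lemma mem_Dgn_iff:
  "(e, h, A) \<in> Dgn g n \<longleftrightarrow> e \<ge> 1 \<and> int g + 1 - int e - int h \<ge> 0 \<and> A \<subseteq> {1..n} \<and>
    2 * int h - 2 + int e + int (card A) > 0 \<and>
    2 * (int g + 1 - int e - int h) - 2 + int e + int (card ({1..n} - A)) > 0"
  unfolding Dgn_def using stable_graph_vine_iff by auto

lemma mem_DG_vine:
  assumes "(e, h, A) \<in> Dgn g n"
  shows "(e, h, A) \<in> DG (vine g n e h A)"
proof -
  let ?G = "vine g n e h A"
  have "nontriv_biconn ?G {0}"
    unfolding nontriv_biconn_def vine_simps
    using connected_in_singleton[of ?G 0] connected_in_singleton[of ?G 1] by (simp add: insert_Diff_if)
  moreover have "setval ?G {0} = e" unfolding setval_def vine_simps by simp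
  moreover have "setgen ?G {0} = int h" unfolding setgen_def inner_edges_def vine_simps by simp
  moreover have "setmark ?G {0} = A" unfolding setmark_def vine_simps by simp
  ultimately show ?thesis unfolding DG_def by (metis (mono_tags, lifting) mem_Collect_eq nat_int)
qed

lemma nontriv_biconn_diff: "nontriv_biconn G W \<Longrightarrow> nontriv_biconn G (verts G - W)"
  unfolding nontriv_biconn_def by (auto simp: double_diff)

lemma DG_subset_Dgn:
  assumes G: "stable_graph g n G"
  shows "DG G \<subseteq> Dgn g n"
proof
  fix t assume "t \<in> DG G"
  then obtain W where W: "nontriv_biconn G W"
    and t: "t = (setval G W, nat (setgen G W), setmark G W)"
    unfolding DG_def by blast
  have sub: "W \<subseteq> verts G" and conn: "connected_in G W" "connected_in G (verts G - W)"
    using W unfolding nontriv_biconn_def by auto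
  have ne: "W \<noteq> {}" "verts G - W \<noteq> {}" using W unfolding nontriv_biconn_def by auto
  have "int (nat (setgen G W)) = setgen G W" using setgen_nonneg[OF G sub conn(1)] by simp
  moreover have "setgen G (verts G - W) \<ge> 0" using setgen_nonneg[OF G _ conn(2)] by simp
  moreover have "setval G W \<ge> 1" using setval_pos[OF G sub] W unfolding nontriv_biconn_def by blast
  ultimately show "t \<in> Dgn g n"
    using stable_vertex_set[OF G sub ne(1)] stable_vertex_set[OF G _ ne(2)]
      setgen_diff[OF G sub] setval_diff[OF G sub] setmark_diff[OF G sub] setmark_subset[OF G sub]
    unfolding t mem_Dgn_iff by simp
qed

lemma compl_triple_mem_DG:
  assumes G: "stable_graph g n G" and t: "t \<in> DG G"
  shows "compl_triple g n t \<in> DG G"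
proof -
  from t obtain W where W: "nontriv_biconn G W" and t: "t = (setval G W, nat (setgen G W), setmark G W)"
    unfolding DG_def by blast
  have sub: "W \<subseteq> verts G" and conn: "connected_in G W" "connected_in G (verts G - W)"
    using W unfolding nontriv_biconn_def by auto
  have "nat (setgen G (verts G - W)) = g + 1 - setval G W - nat (setgen G W)"
    using setgen_diff[OF G sub] setgen_nonneg[OF G sub conn(1)] setgen_nonneg[OF G _ conn(2)] by simp
  then have "compl_triple g n t =
      (setval G (verts G - W), nat (setgen G (verts G - W)), setmark G (verts G - W))"
    using setval_diff[OF G sub] setmark_diff[OF G sub] unfolding t by simp
  then show ?thesis unfolding DG_def using nontriv_biconn_diff[OF W] by blast
qed

section \<open>Isomorphic graphs\<close>

lemma inj_on_image_subset_iff: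
  assumes "inj_on f C" "A \<subseteq> C" "B \<subseteq> C"
  shows "f ` A \<subseteq> f ` B \<longleftrightarrow> A \<subseteq> B"
proof -
  have "f ` A \<subseteq> f ` B \<longleftrightarrow> f ` (A \<inter> B) = f ` A"
    using inj_on_image_Int[OF assms] by blast
  also have "\<dots> \<longleftrightarrow> A \<inter> B = A" using assms by (intro inj_on_image_eq_iff) auto
  finally show ?thesis by blast
qed

lemma rtranclp_map:
  assumes "R\<^sup>*\<^sup>* u v" "\<And>x y. R x y \<Longrightarrow> S (f x) (f y)"
  shows "S\<^sup>*\<^sup>* (f u) (f v)"
  using assms(1) by induction (auto intro: rtranclp.rtrancl_into_rtrancl assms(2))

context
  fixes G H :: sgraph and f \<phi> :: "nat \<Rightarrow> nat"
  assumes bij_f: "bij_betw f (verts G) (verts H)" and bij_\<phi>: "bij_betw \<phi> (edges G) (edges H)"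
    and endpts_\<phi>: "\<And>e. e \<in> edges G \<Longrightarrow> endpts H (\<phi> e) = f ` endpts G e"
    and gen_f: "\<And>v. v \<in> verts G \<Longrightarrow> gen H (f v) = gen G v"
    and mark_f: "\<And>v. v \<in> verts G \<Longrightarrow> mark H (f v) = mark G v"
    and endpts_subset: "\<And>e. e \<in> edges G \<Longrightarrow> endpts G e \<subseteq> verts G"
begin

lemma iso_inj_on: "inj_on f (verts G)" and iso_image_verts: "f ` verts G = verts H"
  using bij_f unfolding bij_betw_def by simp_all

lemma iso_card_edges:
  "card {e' \<in> edges H. Q (endpts H e')} = card {e \<in> edges G. Q (f ` endpts G e)}"
proof -
  have "{e' \<in> edges H. Q (endpts H e')} = \<phi> ` {e \<in> edges G. Q (endpts H (\<phi> e))}"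
    using bij_\<phi> unfolding bij_betw_def by auto
  also have "\<dots> = \<phi> ` {e \<in> edges G. Q (f ` endpts G e)}"
    using endpts_\<phi> by (metis (mono_tags, lifting) Collect_cong)
  finally have "{e' \<in> edges H. Q (endpts H e')} = \<phi> ` {e \<in> edges G. Q (f ` endpts G e)}" .
  moreover have "inj_on \<phi> {e \<in> edges G. Q (f ` endpts G e)}"
    using bij_\<phi> unfolding bij_betw_def by (auto intro: inj_on_subset)
  ultimately show ?thesis by (simp add: card_image)
qed

lemma iso_connected_in:
  assumes "connected_in G X"
  shows "connected_in H (f ` X)"
proof -
  have adj: "adj_in H (f ` X) (f x) (f y)" if "adj_in G X x y" for x y
    using that endpts_\<phi> bij_\<phi> unfolding adj_in_def bij_betw_def by fastforce
  show ?thesis unfolding connected_in_def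
  proof (intro conjI ballI)
    show "f ` X \<noteq> {}" using assms unfolding connected_in_def by simp
    fix u v assume "u \<in> f ` X" "v \<in> f ` X"
    then obtain x y where "x \<in> X" "y \<in> X" "u = f x" "v = f y" by blast
    then show "(adj_in H (f ` X))\<^sup>*\<^sup>* u v"
      using assms rtranclp_map[where f = f] adj unfolding connected_in_def by metis
  qed
qed

lemma iso_setval:
  assumes W: "W \<subseteq> verts G"
  shows "setval H (f ` W) = setval G W"
proof -
  have "setval H (f ` W) = card {e \<in> edges G. f ` endpts G e \<inter> f ` W \<noteq> {} \<and> f ` endpts G e - f ` W \<noteq> {}}"
    unfolding setval_def by (rule iso_card_edges)
  also have "\<dots> = setval G W"
    unfolding setval_def
  proof (rule arg_cong[where f=card], rule Collect_cong)
    fix e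
    have "f ` endpts G e \<inter> f ` W \<noteq> {} \<longleftrightarrow> endpts G e \<inter> W \<noteq> {}"
      "f ` endpts G e - f ` W \<noteq> {} \<longleftrightarrow> endpts G e - W \<noteq> {}" if "e \<in> edges G"
    proof -
      have X: "endpts G e \<subseteq> verts G" using that by (rule endpts_subset)
      then have "f ` (endpts G e \<inter> W) = f ` endpts G e \<inter> f ` W"
        "f ` (endpts G e - W) = f ` endpts G e - f ` W"
        using inj_on_image_Int[OF iso_inj_on X W] inj_on_image_set_diff[OF iso_inj_on _ W]
        by (simp_all add: subset_trans[OF Diff_subset])
      then show "f ` endpts G e \<inter> f ` W \<noteq> {} \<longleftrightarrow> endpts G e \<inter> W \<noteq> {}"
        "f ` endpts G e - f ` W \<noteq> {} \<longleftrightarrow> endpts G e - W \<noteq> {}"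
        by (metis image_is_empty)+
    qed
    then show "(e \<in> edges G \<and> f ` endpts G e \<inter> f ` W \<noteq> {} \<and> f ` endpts G e - f ` W \<noteq> {}) \<longleftrightarrow>
        (e \<in> edges G \<and> endpts G e \<inter> W \<noteq> {} \<and> endpts G e - W \<noteq> {})"
      by blast
  qed
  finally show ?thesis .
qed

lemma iso_setgen:
  assumes W: "W \<subseteq> verts G"
  shows "setgen H (f ` W) = setgen G W"
proof -
  have "card (inner_edges H (f ` W)) = card {e \<in> edges G. f ` endpts G e \<subseteq> f ` W}"
    unfolding inner_edges_def by (rule iso_card_edges)
  also have "\<dots> = card (inner_edges G W)"
    unfolding inner_edges_def using endpts_subset W inj_on_image_subset_iff[OF iso_inj_on]
    by (intro arg_cong[where f=card]) auto
  finally have "card (inner_edges H (f ` W)) = card (inner_edges G W)" .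
  moreover have inj: "inj_on f W" using iso_inj_on W by (rule inj_on_subset)
  moreover have "(\<Sum>v\<in>f ` W. int (gen H v)) = (\<Sum>v\<in>W. int (gen G v))"
    using gen_f W by (simp add: sum.reindex[OF inj] subset_iff)
  ultimately show ?thesis unfolding setgen_def by (simp add: card_image)
qed

lemma iso_setmark: "W \<subseteq> verts G \<Longrightarrow> setmark H (f ` W) = setmark G W"
  unfolding setmark_def using mark_f by auto

lemma iso_nontriv_biconn:
  assumes W: "nontriv_biconn G W"
  shows "nontriv_biconn H (f ` W)"
proof -
  have sub: "W \<subseteq> verts G" and ne: "W \<noteq> {}" "W \<noteq> verts G"
    and conn: "connected_in G W" "connected_in G (verts G - W)"
    using W unfolding nontriv_biconn_def by blast+
  have "verts H - f ` W = f ` (verts G - W)"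
    using inj_on_image_set_diff[OF iso_inj_on _ sub] iso_image_verts by simp
  moreover have "f ` W \<noteq> verts H"
    using ne(2) inj_on_image_eq_iff[OF iso_inj_on sub order_refl] iso_image_verts by simp
  moreover have "f ` W \<subseteq> verts H" using sub iso_image_verts by blast
  ultimately show ?thesis
    unfolding nontriv_biconn_def using ne(1) iso_connected_in[OF conn(1)] iso_connected_in[OF conn(2)]
    by simp
qed

lemma iso_DG_subset: "DG G \<subseteq> DG H"
proof
  fix t assume "t \<in> DG G"
  then obtain W where W: "nontriv_biconn G W" and t: "t = (setval G W, nat (setgen G W), setmark G W)"
    unfolding DG_def by blast
  then have "W \<subseteq> verts G" unfolding nontriv_biconn_def by blast
  then have "t = (setval H (f ` W), nat (setgen H (f ` W)), setmark H (f ` W))"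
    using iso_setval iso_setgen iso_setmark unfolding t by simp
  then show "t \<in> DG H" unfolding DG_def using iso_nontriv_biconn[OF W] by blast
qed

end

lemma graph_iso_DG_subset:
  assumes G: "stable_graph g n G" and "graph_iso G H"
  shows "DG G \<subseteq> DG H"
proof -
  obtain f \<phi> where f: "bij_betw f (verts G) (verts H)" "bij_betw \<phi> (edges G) (edges H)"
      "\<forall>e\<in>edges G. endpts H (\<phi> e) = f ` endpts G e"
      "\<forall>v\<in>verts G. gen H (f v) = gen G v \<and> mark H (f v) = mark G v"
    using assms(2) unfolding graph_iso_def by blast
  show ?thesis by (rule iso_DG_subset[OF f(1,2)]) (use f(3,4) stable_graph_endpts[OF G] in auto)
qed

section \<open>Triangle graphs\<close>

fun admissible_triple :: "triple \<Rightarrow> triple \<Rightarrow> triple \<Rightarrow> bool" where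
  "admissible_triple (e, h, A) (e', h', A') (e'', h'', A'') \<longleftrightarrow>
     A = A' \<union> A'' \<and> A' \<inter> A'' = {} \<and>
     2 * (int h + 1 - int h' - int h'') = int e' + int e'' - int e \<and>
     e < e' + e'' \<and> e' < e + e'' \<and> e'' < e + e'"

definition triangle_graph ::
    "nat \<Rightarrow> nat \<Rightarrow> nat \<Rightarrow> nat \<Rightarrow> nat \<Rightarrow> nat \<Rightarrow> nat \<Rightarrow> nat set \<Rightarrow> nat set \<Rightarrow> nat set \<Rightarrow> sgraph" where
  "triangle_graph n a b c h1 h2 h0 A1 A2 A = \<lparr> verts = {0, 1, 2}, edges = {0..<a + b + c},
     endpts = (\<lambda>i. if i < a then {0, 1} else if i < a + b then {0, 2} else {1, 2}),
     gen = (\<lambda>v. if v = 0 then h1 else if v = 1 then h2 else h0),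
     mark = (\<lambda>v. if v = 0 then A1 else if v = 1 then A2 else {1..n} - A) \<rparr>"

lemma connected_in_if_reachable:
  assumes "r \<in> W" "\<And>v. v \<in> W \<Longrightarrow> (adj_in G W)\<^sup>*\<^sup>* r v"
  shows "connected_in G W"
  using assms sympD[OF symp_rtranclp[OF symp_adj_in]] rtranclp_trans
  unfolding connected_in_def by (metis empty_iff)

context
  fixes n a b c h1 h2 h0 :: nat and A1 A2 A :: "nat set" and T :: sgraph
  defines "T \<equiv> triangle_graph n a b c h1 h2 h0 A1 A2 A"
  assumes abc: "a \<ge> 1" "b \<ge> 1" "c \<ge> 1"
begin

lemma triangle_simps:
  "verts T = {0, 1, 2}" "edges T = {0..<a + b + c}"
  "endpts T i = (if i < a then {0, 1} else if i < a + b then {0, 2} else {1, 2})"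
  "gen T v = (if v = 0 then h1 else if v = 1 then h2 else h0)"
  "mark T v = (if v = 0 then A1 else if v = 1 then A2 else {1..n} - A)"
  unfolding T_def triangle_graph_def by simp_all

lemma triangle_adj_in:
  "{0, 1} \<subseteq> W \<Longrightarrow> adj_in T W 0 1" "{0, 2} \<subseteq> W \<Longrightarrow> adj_in T W 0 2"
  "{1, 2} \<subseteq> W \<Longrightarrow> adj_in T W 1 2"
proof -
  show "{0, 1} \<subseteq> W \<Longrightarrow> adj_in T W 0 1"
    unfolding adj_in_def triangle_simps using abc by (auto intro!: bexI[of _ 0])
  show "{0, 2} \<subseteq> W \<Longrightarrow> adj_in T W 0 2"
    unfolding adj_in_def triangle_simps using abc by (auto intro!: bexI[of _ a])
  show "{1, 2} \<subseteq> W \<Longrightarrow> adj_in T W 1 2"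
    unfolding adj_in_def triangle_simps using abc by (auto intro!: bexI[of _ "a + b"])
qed

lemma triangle_connected:
  "connected_in T {0, 1, 2}" "connected_in T {0, 1}" "connected_in T {0, 2}" "connected_in T {1, 2}"
proof -
  show "connected_in T {0, 1, 2}"
    by (rule connected_in_if_reachable[of 0]) (use triangle_adj_in(1,2)[of "{0, 1, 2}"] in auto)
  show "connected_in T {0, 1}"
    by (rule connected_in_if_reachable[of 0]) (use triangle_adj_in(1)[of "{0, 1}"] in auto)
  show "connected_in T {0, 2}"
    by (rule connected_in_if_reachable[of 0]) (use triangle_adj_in(2)[of "{0, 2}"] in auto)
  show "connected_in T {1, 2}"
    by (rule connected_in_if_reachable[of 1]) (use triangle_adj_in(3)[of "{1, 2}"] in auto)
qed

lemma triangle_vval: "vval T 0 = a + b" "vval T 1 = a + c" "vval T 2 = b + c"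
proof -
  have no_loops: "{i \<in> edges T. endpts T i = {v}} = {}" for v
    unfolding triangle_simps by (auto simp: doubleton_eq_iff)
  have "{i \<in> edges T. 0 \<in> endpts T i \<and> card (endpts T i) = 2} = {0..<a + b}"
    unfolding triangle_simps by auto
  then show "vval T 0 = a + b" unfolding vval_def no_loops by simp
  have "{i \<in> edges T. 1 \<in> endpts T i \<and> card (endpts T i) = 2} = {0..<a} \<union> {a + b..<a + b + c}"
    unfolding triangle_simps by auto
  then show "vval T 1 = a + c" unfolding vval_def no_loops by (simp add: card_Un_disjoint)
  have "{i \<in> edges T. 2 \<in> endpts T i \<and> card (endpts T i) = 2} = {a..<a + b + c}"
    unfolding triangle_simps by auto
  then show "vval T 2 = b + c" unfolding vval_def no_loops by simp
qed

lemma triangle_setval: "setval T {0} = a + b" "setval T {1} = a + c" "setval T {0, 1} = b + c"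
proof -
  have "{i \<in> edges T. endpts T i \<inter> {0} \<noteq> {} \<and> endpts T i - {0} \<noteq> {}} = {0..<a + b}"
    unfolding triangle_simps by auto
  then show "setval T {0} = a + b" unfolding setval_def by simp
  have "{i \<in> edges T. endpts T i \<inter> {1} \<noteq> {} \<and> endpts T i - {1} \<noteq> {}} = {0..<a} \<union> {a + b..<a + b + c}"
    unfolding triangle_simps by auto
  then show "setval T {1} = a + c" unfolding setval_def by (simp add: card_Un_disjoint)
  have "{i \<in> edges T. endpts T i \<inter> {0, 1} \<noteq> {} \<and> endpts T i - {0, 1} \<noteq> {}} = {a..<a + b + c}"
    unfolding triangle_simps by auto
  then show "setval T {0, 1} = b + c" unfolding setval_def by simp
qed

lemma triangle_setgen:
  "setgen T {0} = int h1" "setgen T {1} = int h2" "setgen T {0, 1} = int a - 1 + int h1 + int h2"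
proof -
  have "inner_edges T {0} = {}" "inner_edges T {1} = {}" "inner_edges T {0, 1} = {0..<a}"
    unfolding inner_edges_def triangle_simps using abc by auto
  then show "setgen T {0} = int h1" "setgen T {1} = int h2"
    "setgen T {0, 1} = int a - 1 + int h1 + int h2"
    unfolding setgen_def triangle_simps by simp_all
qed

lemma triangle_nontriv_biconn: "nontriv_biconn T {0}" "nontriv_biconn T {1}" "nontriv_biconn T {0, 1}"
proof -
  have diff: "{0::nat, 1, 2} - {0} = {1, 2}" "{0::nat, 1, 2} - {1} = {0, 2}" "{0::nat, 1, 2} - {0, 1} = {2}"
    by (simp_all add: insert_Diff_if)
  have "(2::nat) \<notin> {0, 1}" "(0::nat) \<notin> {1}" by simp_all
  then have proper: "{0::nat} \<noteq> {0, 1, 2}" "{1::nat} \<noteq> {0, 1, 2}" "{0::nat, 1} \<noteq> {0, 1, 2}"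
    by blast+
  show "nontriv_biconn T {0}"
    unfolding nontriv_biconn_def triangle_simps(1) diff(1)
    using proper(1) triangle_connected(4) connected_in_singleton[of T 0] by blast
  show "nontriv_biconn T {1}"
    unfolding nontriv_biconn_def triangle_simps(1) diff(2)
    using proper(2) triangle_connected(3) connected_in_singleton[of T 1] by blast
  show "nontriv_biconn T {0, 1}"
    unfolding nontriv_biconn_def triangle_simps(1) diff(3)
    using proper(3) triangle_connected(2) connected_in_singleton[of T 2] by blast
qed

lemma triangle_stable_graph:
  assumes A: "A1 \<subseteq> {1..n}" "A2 \<subseteq> {1..n}" "A = A1 \<union> A2" "A1 \<inter> A2 = {}"
    and genus: "int a + int b + int c - 2 + int h1 + int h2 + int h0 = int g"
    and stable: "2 * int h1 - 2 + int (a + b) + int (card A1) > 0"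
      "2 * int h2 - 2 + int (a + c) + int (card A2) > 0"
      "2 * int h0 - 2 + int (b + c) + int (card ({1..n} - A)) > 0"
  shows "stable_graph g n T"
  unfolding stable_graph_def
proof (intro conjI)
  show "connected_in T (verts T)" unfolding triangle_simps(1) by (rule triangle_connected(1))
  show "int (card (edges T)) - int (card (verts T)) + 1 + (\<Sum>v\<in>verts T. int (gen T v)) = int g"
    using genus by (simp add: triangle_simps)
  show "\<forall>v\<in>verts T. 2 * int (gen T v) - 2 + int (vval T v) + int (card (mark T v)) > 0"
    using stable triangle_vval unfolding triangle_simps(1) by (simp add: triangle_simps)
qed (use A in \<open>auto simp: triangle_simps\<close>)

end

text \<open>An admissible triple is realised by the triangle graph with \<open>h + 1 - h' - h''\<close> edges
  between the vertices carrying \<open>(h', A')\<close> and \<open>(h'', A'')\<close>: then \<open>{0, 1}\<close> has genus \<open>h\<close>.\<close>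
lemma admissible_triple_realised:
  assumes "t \<in> Dgn g n" "t' \<in> Dgn g n" "t'' \<in> Dgn g n" "admissible_triple t t' t''"
  shows "\<exists>G. stable_graph g n G \<and> t \<in> DG G \<and> t' \<in> DG G \<and> t'' \<in> DG G"
proof -
  obtain e h A e' h' A' e'' h'' A'' where eq: "t = (e, h, A)" "t' = (e', h', A')" "t'' = (e'', h'', A'')"
    by (cases t, cases t', cases t'') blast
  have t: "(e, h, A) \<in> Dgn g n" and t': "(e', h', A') \<in> Dgn g n" and t'': "(e'', h'', A'') \<in> Dgn g n"
    and adm: "admissible_triple (e, h, A) (e', h', A') (e'', h'', A'')"
    using assms unfolding eq by simp_all
  define a where "a = nat (int h + 1 - int h' - int h'')"
  define h0 where "h0 = g + 1 - e - h"
  have a: "2 * int a = int e' + int e'' - int e" "int a = int h + 1 - int h' - int h''"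
    using adm unfolding a_def by auto
  have abc: "a \<ge> 1" "e' - a \<ge> 1" "e'' - a \<ge> 1" and bc: "int (e' - a) = int e' - int a" "int (e'' - a) = int e'' - int a"
    using a adm by auto
  have h0: "int h0 = int g + 1 - int e - int h" using t unfolding h0_def mem_Dgn_iff by linarith
  let ?T = "triangle_graph n a (e' - a) (e'' - a) h' h'' h0 A' A'' A"
  note simps = triangle_simps[OF abc]
  have "stable_graph g n ?T"
  proof (rule triangle_stable_graph[OF abc])
    show "A' \<subseteq> {1..n}" "A'' \<subseteq> {1..n}" "A = A' \<union> A''" "A' \<inter> A'' = {}"
      using t' t'' adm unfolding mem_Dgn_iff by auto
    show "int a + int (e' - a) + int (e'' - a) - 2 + int h' + int h'' + int h0 = int g"
      using a bc h0 by linarith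
    show "2 * int h' - 2 + int (a + (e' - a)) + int (card A') > 0"
      "2 * int h'' - 2 + int (a + (e'' - a)) + int (card A'') > 0"
      "2 * int h0 - 2 + int (e' - a + (e'' - a)) + int (card ({1..n} - A)) > 0"
      using t t' t'' a bc h0 unfolding mem_Dgn_iff by auto
  qed
  moreover have "(e', h', A') = (setval ?T {0}, nat (setgen ?T {0}), setmark ?T {0})"
    "(e'', h'', A'') = (setval ?T {1}, nat (setgen ?T {1}), setmark ?T {1})"
    "(e, h, A) = (setval ?T {0, 1}, nat (setgen ?T {0, 1}), setmark ?T {0, 1})"
    using triangle_setval[OF abc] triangle_setgen[OF abc] a bc adm
    unfolding setmark_def simps by auto
  ultimately show ?thesis
    unfolding DG_def eq using triangle_nontriv_biconn[OF abc, of n h' h'' h0 A' A'' A] by blast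
qed

section \<open>Gluing stability conditions\<close>

fun defect :: "(triple \<Rightarrow> int) \<Rightarrow> triple \<Rightarrow> triple \<Rightarrow> triple \<Rightarrow> int" where
  "defect m (e, h, A) (e', h', A') (e'', h'', A'') =
     m (e, h, A) - int h - (m (e', h', A') - int h') - (m (e'', h'', A'') - int h'')"

lemma cond_i_iff:
  "cond_i g n d D m \<longleftrightarrow> (\<forall>t\<in>D. m t + m (compl_triple g n t) = d + 1 - int (fst t))"
  unfolding cond_i_def by auto

lemma cond_ii_iff:
  "cond_ii D m \<longleftrightarrow>
     (\<forall>t\<in>D. \<forall>t'\<in>D. \<forall>t''\<in>D. admissible_triple t t' t'' \<longrightarrow> defect m t t' t'' \<in> {0..1})"
proof -
  have "cond_ii D m \<longleftrightarrow> (\<forall>(e, h, A)\<in>D. \<forall>(e', h', A')\<in>D. \<forall>(e'', h'', A'')\<in>D.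
     admissible_triple (e, h, A) (e', h', A') (e'', h'', A'') \<longrightarrow>
     defect m (e, h, A) (e', h', A') (e'', h'', A'') \<in> {0..1})"
    unfolding cond_ii_def by simp
  then show ?thesis by (simp only: Ball_def split_paired_All case_prod_conv)
qed

lemma cond_i_subset: "cond_i g n d D m \<Longrightarrow> D' \<subseteq> D \<Longrightarrow> cond_i g n d D' m"
  unfolding cond_i_iff by blast

lemma cond_ii_subset: "cond_ii D m \<Longrightarrow> D' \<subseteq> D \<Longrightarrow> cond_ii D' m"
  unfolding cond_ii_iff by blast

lemma cond_i_cong:
  assumes "\<And>t. t \<in> D \<Longrightarrow> compl_triple g n t \<in> D" and "\<And>t. t \<in> D \<Longrightarrow> m t = m' t"
  shows "cond_i g n d D m \<longleftrightarrow> cond_i g n d D m'"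
  unfolding cond_i_iff using assms by simp

lemma defect_cong:
  "m t = m' t \<Longrightarrow> m t' = m' t' \<Longrightarrow> m t'' = m' t'' \<Longrightarrow> defect m t t' t'' = defect m' t t' t''"
  by (cases t; cases t'; cases t'') simp

lemma cond_ii_cong:
  assumes "\<And>t. t \<in> D \<Longrightarrow> m t = m' t"
  shows "cond_ii D m \<longleftrightarrow> cond_ii D m'"
proof -
  have "defect m t t' t'' = defect m' t t' t''" if "t \<in> D" "t' \<in> D" "t'' \<in> D" for t t' t''
    using defect_cong assms that by blast
  then show ?thesis unfolding cond_ii_iff by (simp cong: ball_cong)
qed

lemma compat_familiesD:
  assumes "F \<in> compat_families g n d R" and "G \<in> R"
  shows "F G \<in> DG G \<rightarrow>\<^sub>E UNIV" "cond_i g n d (DG G) (F G)" "cond_ii (DG G) (F G)"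
    and "\<And>H t. H \<in> R \<Longrightarrow> t \<in> DG G \<Longrightarrow> t \<in> DG H \<Longrightarrow> F G t = F H t"
proof -
  have F: "F \<in> (\<Pi>\<^sub>E G\<in>R. c_stab g n d G)" "\<forall>G\<in>R. \<forall>H\<in>R. \<forall>t \<in> DG G \<inter> DG H. F G t = F H t"
    using assms(1) unfolding compat_families_def by blast+
  then have "F G \<in> c_stab g n d G" using assms(2) by blast
  then show "F G \<in> DG G \<rightarrow>\<^sub>E UNIV" "cond_i g n d (DG G) (F G)" "cond_ii (DG G) (F G)"
    unfolding c_stab_def by blast+
  show "\<And>H t. H \<in> R \<Longrightarrow> t \<in> DG G \<Longrightarrow> t \<in> DG H \<Longrightarrow> F G t = F H t"
    using F(2) assms(2) by blast
qed

locale DG_covering =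
  fixes g n :: nat and R :: "sgraph set"
  assumes DG_subset_Dgn: "\<And>G. G \<in> R \<Longrightarrow> DG G \<subseteq> Dgn g n"
    and compl_triple_DG: "\<And>G t. G \<in> R \<Longrightarrow> t \<in> DG G \<Longrightarrow> compl_triple g n t \<in> DG G"
    and Dgn_covered: "\<And>t. t \<in> Dgn g n \<Longrightarrow> \<exists>G\<in>R. t \<in> DG G"
    and admissible_covered: "\<And>t t' t''. t \<in> Dgn g n \<Longrightarrow> t' \<in> Dgn g n \<Longrightarrow> t'' \<in> Dgn g n \<Longrightarrow>
      admissible_triple t t' t'' \<Longrightarrow> \<exists>G\<in>R. t \<in> DG G \<and> t' \<in> DG G \<and> t'' \<in> DG G"
begin

definition glue :: "(sgraph \<Rightarrow> triple \<Rightarrow> int) \<Rightarrow> triple \<Rightarrow> int" where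
  "glue F = (\<lambda>t\<in>Dgn g n. F (SOME G. G \<in> R \<and> t \<in> DG G) t)"

lemma restr_map_mem_compat_families:
  assumes m: "m \<in> univ_stab g n d"
  shows "restr_map R m \<in> compat_families g n d R"
proof -
  have "restrict m (DG G) \<in> c_stab g n d G" if G: "G \<in> R" for G
  proof -
    have "cond_i g n d (DG G) m" "cond_ii (DG G) m"
      using m DG_subset_Dgn[OF G] cond_i_subset cond_ii_subset unfolding univ_stab_def by blast+
    moreover have "cond_i g n d (DG G) (restrict m (DG G)) \<longleftrightarrow> cond_i g n d (DG G) m"
      by (rule cond_i_cong) (simp_all add: compl_triple_DG[OF G])
    moreover have "cond_ii (DG G) (restrict m (DG G)) \<longleftrightarrow> cond_ii (DG G) m"
      by (rule cond_ii_cong) simp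
    ultimately show ?thesis unfolding c_stab_def by simp
  qed
  then show ?thesis
    unfolding compat_families_def restr_map_def by auto
qed

lemma glue_eq:
  assumes F: "F \<in> compat_families g n d R" and G: "G \<in> R" "t \<in> DG G"
  shows "glue F t = F G t"
proof -
  let ?H = "SOME G. G \<in> R \<and> t \<in> DG G"
  have H: "?H \<in> R \<and> t \<in> DG ?H" by (rule someI[of _ G]) (use G in simp)
  then have "F ?H t = F G t" using compat_familiesD(4)[OF F] G by blast
  then show ?thesis unfolding glue_def using G DG_subset_Dgn by auto
qed

lemma glue_mem_univ_stab:
  assumes F: "F \<in> compat_families g n d R"
  shows "glue F \<in> univ_stab g n d"
proof -
  have "cond_i g n d {t} (glue F)" if t: "t \<in> Dgn g n" for t
  proof -
    obtain G where G: "G \<in> R" "t \<in> DG G" using Dgn_covered[OF t] by blast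
    have "cond_i g n d (DG G) (glue F)"
      using compat_familiesD(2)[OF F G(1)] cond_i_cong[of "DG G" g n "glue F" "F G"]
        compl_triple_DG[OF G(1)] glue_eq[OF F G(1)] by blast
    then show ?thesis using cond_i_subset G(2) by blast
  qed
  then have "cond_i g n d (Dgn g n) (glue F)" unfolding cond_i_iff by blast
  moreover have "cond_ii (Dgn g n) (glue F)" unfolding cond_ii_iff
  proof (intro ballI impI)
    fix t t' t'' assume tt: "t \<in> Dgn g n" "t' \<in> Dgn g n" "t'' \<in> Dgn g n"
      and adm: "admissible_triple t t' t''"
    obtain G where G: "G \<in> R" "t \<in> DG G" "t' \<in> DG G" "t'' \<in> DG G"
      using admissible_covered[OF tt adm] by blast
    have "defect (F G) t t' t'' \<in> {0..1}"
      using compat_familiesD(3)[OF F G(1)] G adm unfolding cond_ii_iff by blast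
    then show "defect (glue F) t t' t'' \<in> {0..1}"
      using defect_cong[of "glue F" t "F G" t' t''] glue_eq[OF F G(1)] G by simp
  qed
  ultimately show ?thesis unfolding univ_stab_def glue_def by simp
qed

lemma restr_map_glue:
  assumes F: "F \<in> compat_families g n d R"
  shows "restr_map R (glue F) = F"
proof (rule ext)
  fix G
  show "restr_map R (glue F) G = F G"
  proof (cases "G \<in> R")
    case True
    then show ?thesis
      using glue_eq[OF F True] PiE_arb[OF compat_familiesD(1)[OF F True]]
      unfolding restr_map_def by (auto simp: restrict_def)
  next
    case False
    then show ?thesis using F unfolding compat_families_def restr_map_def by auto
  qed
qed

lemma inj_on_restr_map: "inj_on (restr_map R) (univ_stab g n d)"
proof (rule inj_onI)
  fix m m' assume m: "m \<in> univ_stab g n d" and m': "m' \<in> univ_stab g n d"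
    and eq: "restr_map R m = restr_map R m'"
  show "m = m'"
  proof (rule PiE_ext)
    show "m \<in> Dgn g n \<rightarrow>\<^sub>E UNIV" "m' \<in> Dgn g n \<rightarrow>\<^sub>E UNIV"
      using m m' unfolding univ_stab_def by auto
    fix t assume "t \<in> Dgn g n"
    then obtain G where "G \<in> R" "t \<in> DG G" using Dgn_covered by blast
    then show "m t = m' t" using fun_cong[OF fun_cong[OF eq, of G], of t] unfolding restr_map_def by simp
  qed
qed

lemma bij_betw_restr_map: "bij_betw (restr_map R) (univ_stab g n d) (compat_families g n d R)"
proof (rule bij_betw_imageI[OF inj_on_restr_map])
  show "restr_map R ` univ_stab g n d = compat_families g n d R"
  proof
    show "restr_map R ` univ_stab g n d \<subseteq> compat_families g n d R"
      using restr_map_mem_compat_families by blast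
    show "compat_families g n d R \<subseteq> restr_map R ` univ_stab g n d"
    proof
      fix F assume F: "F \<in> compat_families g n d R"
      then have "F = restr_map R (glue F)" by (simp add: restr_map_glue)
      then show "F \<in> restr_map R ` univ_stab g n d" using glue_mem_univ_stab[OF F] by blast
    qed
  qed
qed

lemma the_inv_into_restr_map:
  "F \<in> compat_families g n d R \<Longrightarrow> the_inv_into (univ_stab g n d) (restr_map R) F = glue F"
  using the_inv_into_f_eq[OF inj_on_restr_map] restr_map_glue glue_mem_univ_stab by blast

end

lemma is_Ggn_representative:
  assumes R: "is_Ggn g n R" and G: "stable_graph g n G" and X: "X \<subseteq> DG G"
  shows "\<exists>H\<in>R. X \<subseteq> DG H"
  using R graph_iso_DG_subset[OF G] X unfolding is_Ggn_def by (meson G subset_trans)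

lemma is_Ggn_DG_covering:
  assumes R: "is_Ggn g n R"
  shows "DG_covering g n R"
proof
  have stable: "stable_graph g n G" if "G \<in> R" for G
    using R that unfolding is_Ggn_def by blast
  show "DG G \<subseteq> Dgn g n" if "G \<in> R" for G
    using DG_subset_Dgn stable that by blast
  show "compl_triple g n t \<in> DG G" if "G \<in> R" "t \<in> DG G" for G t
    using compl_triple_mem_DG stable that by blast
  show "\<exists>G\<in>R. t \<in> DG G" if t: "t \<in> Dgn g n" for t
  proof -
    obtain e h A where eq: "t = (e, h, A)" by (cases t) blast
    have "stable_graph g n (vine g n e h A)" "{t} \<subseteq> DG (vine g n e h A)"
      using t mem_DG_vine unfolding eq Dgn_def by auto
    from is_Ggn_representative[OF R this] show ?thesis by blast
  qed
  show "\<exists>G\<in>R. t \<in> DG G \<and> t' \<in> DG G \<and> t'' \<in> DG G"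
    if adm: "t \<in> Dgn g n" "t' \<in> Dgn g n" "t'' \<in> Dgn g n" "admissible_triple t t' t''" for t t' t''
  proof -
    obtain G where "stable_graph g n G" "{t, t', t''} \<subseteq> DG G"
      using admissible_triple_realised[OF adm] by blast
    from is_Ggn_representative[OF R this] show ?thesis by blast
  qed
qed

theorem mainTheorem11:
  fixes g n :: nat and d :: int and R :: "sgraph set"
  assumes hyp: "2 * int g - 2 + int n > 0"
    and R: "is_Ggn g n R"
  shows "bij_betw (restr_map R) (univ_stab g n d) (compat_families g n d R) \<and>
         (\<forall>F\<in>compat_families g n d R. \<forall>G\<in>R. \<forall>t\<in>DG G.
            the_inv_into (univ_stab g n d) (restr_map R) F t = F G t)"
proof -
  interpret DG_covering g n R using R by (rule is_Ggn_DG_covering)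
  show ?thesis using bij_betw_restr_map the_inv_into_restr_map glue_eq by simp
qed

end
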